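(* Let $N_t\ge 1$, let $\mathbf{g}_1,\mathbf{g}_2,\mathbf{h}_c\in\mathbb{C}^{N_t}$, let $t_1,t_2>0$, $\sigma^2>0$, $P_{\max}>0$ and $\bar R_{\min}\ge 0$, and set $\bar\gamma_{\min}=2^{\bar R_{\min}}-1$. Consider the sum-of-ratios problem $$(\mathrm{P1}):\quad \min_{\mathbf{w}\in\mathbb{C}^{N_t}}\ f(\mathbf{w})=\frac{t_1}{|\mathbf{g}_1^{\mathrm H}\mathbf{w}|^2}+\frac{t_2}{|\mathbf{g}_2^{\mathrm H}\mathbf{w}|^2}\quad\text{s.t.}\quad \log_2\!\Big(1+\frac{|\mathbf{h}_c^{\mathrm H}\mathbf{w}|^2}{\sigma^2}\Big)\ge \bar R_{\min},\qquad \mathbf{w}^{\mathrm H}\mathbf{w}\le P_{\max},$$ and the problem $$(\mathrm{P2}):\quad \min_{\mathbf{w}\in\mathbb{C}^{N_t},\ \tilde{\mathbf{y}}=(\tilde y_1,\tilde y_2)\in\mathbb{R}^2}\ \tilde F(\mathbf{w},\tilde{\mathbf{y}})=\sum_{i=1}^{2}\frac{1}{\big[\,2\tilde y_i\sqrt{|\mathbf{g}_i^{\mathrm H}\mathbf{w}|^2}-\tilde y_i^{2}\,t_i\,\big]_+}\quad\text{s.t.}\quad \mathbf{h}_c^{\mathrm H}\mathbf{w}\ge\sqrt{\sigma^2\bar\gamma_{\min}},\qquad \mathbf{w}^{\mathrm H}\mathbf{w}\le P_{\max},$$ where the constraint $\mathbf{h}_c^{\mathrm H}\mathbf{w}\ge\sqrt{\sigma^2\bar\gamma_{\min}}$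 means that $\mathbf{h}_c^{\mathrm H}\mathbf{w}$ is a real number at least $\sqrt{\sigma^2\bar\gamma_{\min}}$. Then (P1) and (P2) are equivalent: they have the same optimal value.
   Context: $[x]_+=\max\{x,0\}$, with the convention $1/[x]_+=+\infty$ when $x\le 0$, and likewise $t_i/0=+\infty$ in $f$. $(\cdot)^{\mathrm H}$ denotes conjugate transpose. In the paper's application, $\mathbf{g}_1$ is the projected sensing vector $\mathbf{h}_s$, $\mathbf{g}_2$ is the projected distance vector $\tilde{\boldsymbol{\alpha}}_{\rho_s}$, $t_i=[\tilde{\mathbf{T}}]_{(i,i)}$ are diagonal entries of a coordinate-transformation weight matrix, $\mathbf{h}_c$ is the communication channel, $\mathbf{w}$ is the beamformer and $\tilde{\mathbf{y}}$ are auxiliary variables; these interpretations are not needed for the statement. *)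

theory Defs
  imports "HOL-Analysis.Analysis"
begin

definition herm :: "complex ^ 'n \<Rightarrow> complex ^ 'n \<Rightarrow> complex" where
  "herm g w = (\<Sum>i\<in>UNIV. cnj (g $ i) * w $ i)"

definition ediv :: "real \<Rightarrow> real \<Rightarrow> ereal" where
  "ediv t x = (if x \<le> 0 then \<infinity> else ereal (t / x))"

definition inv_pos :: "real \<Rightarrow> ereal" where
  "inv_pos x = (if x \<le> 0 then \<infinity> else ereal (1 / x))"

definition f_P1 :: "real \<Rightarrow> real \<Rightarrow> complex ^ 'n \<Rightarrow> complex ^ 'n \<Rightarrow> complex ^ 'n \<Rightarrow> ereal" where
  "f_P1 t1 t2 g1 g2 w = ediv t1 ((cmod (herm g1 w))\<^sup>2) + ediv t2 ((cmod (herm g2 w))\<^sup>2)"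

definition F_P2 :: "real \<Rightarrow> real \<Rightarrow> complex ^ 'n \<Rightarrow> complex ^ 'n \<Rightarrow> complex ^ 'n \<Rightarrow> real \<Rightarrow> real \<Rightarrow> ereal" where
  "F_P2 t1 t2 g1 g2 w y1 y2 =
     inv_pos (2 * y1 * sqrt ((cmod (herm g1 w))\<^sup>2) - y1\<^sup>2 * t1)
   + inv_pos (2 * y2 * sqrt ((cmod (herm g2 w))\<^sup>2) - y2\<^sup>2 * t2)"

definition feasible_P1 :: "complex ^ 'n \<Rightarrow> real \<Rightarrow> real \<Rightarrow> real \<Rightarrow> complex ^ 'n \<Rightarrow> bool" where
  "feasible_P1 hc \<sigma>2 Pmax Rmin w \<longleftrightarrow>
     log 2 (1 + (cmod (herm hc w))\<^sup>2 / \<sigma>2) \<ge> Rmin \<and> Re (herm w w) \<le> Pmax"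

definition feasible_P2 :: "complex ^ 'n \<Rightarrow> real \<Rightarrow> real \<Rightarrow> real \<Rightarrow> complex ^ 'n \<Rightarrow> bool" where
  "feasible_P2 hc \<sigma>2 Pmax Rmin w \<longleftrightarrow>
     herm hc w \<in> \<real> \<and> Re (herm hc w) \<ge> sqrt (\<sigma>2 * (2 powr Rmin - 1)) \<and> Re (herm w w) \<le> Pmax"

end

theory Submission
  imports Defs
begin

text \<open>
  First, for \<open>t > 0\<close> and real \<open>a\<close> the quadratic
  transform \<open>2 y a - y\<^sup>2 t\<close> is at most \<open>a\<^sup>2 / t\<close>, with equality at \<open>y = a / t\<close>; hence
  \<open>t / a\<^sup>2 = min\<^sub>y 1 / [2 y a - y\<^sup>2 t]\<^sub>+\<close> and minimising over \<open>y\<close> turns the objective of (P2)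
  into that of (P1). Second, the objective and the power constraint only see \<open>|g\<^sup>H w|\<close>
  and \<open>w\<^sup>H w\<close>, so any \<open>w\<close> may be rotated by a unit phase making \<open>h\<^sub>c\<^sup>H w\<close> real and
  nonnegative; then the rate constraint of (P1), \<open>|h\<^sub>c\<^sup>H w|\<^sup>2 \<ge> \<sigma>\<^sup>2 \<gamma>\<close>, becomes the linear
  constraint of (P2).
\<close>

lemma herm_scalar_mult_right: "herm g (z *s w) = z * herm g w"
  unfolding herm_def by (simp add: sum_distrib_left algebra_simps)

lemma herm_scalar_mult: "herm (z *s w) (z *s w) = (cmod z)\<^sup>2 * herm w w"
proof -
  have "herm (z *s w) (z *s w) = (cnj z * z) * herm w w"
    unfolding herm_def by (simp add: sum_distrib_left algebra_simps)
  also have "cnj z * z = (cmod z)\<^sup>2"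
    by (metis complex_norm_square mult.commute)
  finally show ?thesis .
qed

lemma cis_minus_Arg_mult: "cis (- Arg c) * c = cmod c"
proof -
  have "cis (- Arg c) * c = cis (- Arg c) * (cmod c * cis (Arg c))"
    by (metis rcis_cmod_Arg rcis_def)
  also have "\<dots> = cmod c"
    by (simp add: cis_mult)
  finally show ?thesis .
qed

lemma quadratic_transform_lower_bound:
  fixes t a y :: real
  assumes "t > 0"
  shows "ediv t (a\<^sup>2) \<le> inv_pos (2 * y * a - y\<^sup>2 * t)"
proof (cases "2 * y * a - y\<^sup>2 * t \<le> 0")
  case True
  then show ?thesis
    by (simp add: inv_pos_def)
next
  case False
  with assms have "a \<noteq> 0"
    by auto
  have "t * (2 * y * a - y\<^sup>2 * t) \<le> a\<^sup>2"
    using zero_le_power2[of "a - y * t"] by (simp add: power2_eq_square algebra_simps)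
  with False \<open>a \<noteq> 0\<close> assms(1) have "t / a\<^sup>2 \<le> 1 / (2 * y * a - y\<^sup>2 * t)"
    by (simp add: divide_simps mult.commute)
  with False \<open>a \<noteq> 0\<close> show ?thesis
    by (simp add: inv_pos_def ediv_def)
qed

lemma quadratic_transform_at_optimum:
  fixes t a :: real
  assumes "t > 0"
  shows "inv_pos (2 * (a / t) * a - (a / t)\<^sup>2 * t) = ediv t (a\<^sup>2)"
proof (cases "a = 0")
  case True
  then show ?thesis
    by (simp add: inv_pos_def ediv_def)
next
  case False
  have optimum_value: "2 * (a / t) * a - (a / t)\<^sup>2 * t = a\<^sup>2 / t"
    using assms by (simp add: power2_eq_square field_simps)
  have "\<not> a\<^sup>2 / t \<le> 0"
    using assms False by (simp add: not_le)
  then show ?thesis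
    unfolding optimum_value inv_pos_def ediv_def using assms False by simp
qed

lemma f_P1_le_F_P2:
  assumes "t1 > 0" and "t2 > 0"
  shows "f_P1 t1 t2 g1 g2 w \<le> F_P2 t1 t2 g1 g2 w y1 y2"
  unfolding f_P1_def F_P2_def
  using assms by (simp add: add_mono quadratic_transform_lower_bound)

lemma F_P2_at_optimal_y:
  assumes "t1 > 0" and "t2 > 0"
  shows "F_P2 t1 t2 g1 g2 w (cmod (herm g1 w) / t1) (cmod (herm g2 w) / t2) = f_P1 t1 t2 g1 g2 w"
  unfolding f_P1_def F_P2_def real_sqrt_abs abs_norm_cancel
  using assms by (simp only: quadratic_transform_at_optimum)

lemma f_P1_unit_scalar_mult:
  assumes "cmod z = 1"
  shows "f_P1 t1 t2 g1 g2 (z *s w) = f_P1 t1 t2 g1 g2 w"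
  unfolding f_P1_def herm_scalar_mult_right norm_mult assms by simp

lemma rate_constraint_iff:
  assumes "\<sigma>2 > 0" and "x \<ge> 0"
  shows "Rmin \<le> log 2 (1 + x / \<sigma>2) \<longleftrightarrow> \<sigma>2 * (2 powr Rmin - 1) \<le> x"
proof -
  have "1 + x / \<sigma>2 > 0"
    using assms by (simp add: add_pos_nonneg)
  then have "Rmin \<le> log 2 (1 + x / \<sigma>2) \<longleftrightarrow> 2 powr Rmin \<le> 1 + x / \<sigma>2"
    by (simp add: le_log_iff)
  also have "\<dots> \<longleftrightarrow> \<sigma>2 * (2 powr Rmin - 1) \<le> x"
    using assms(1) by (simp add: field_simps)
  finally show ?thesis .
qed

lemma feasible_P1_iff:
  assumes "\<sigma>2 > 0"
  shows "feasible_P1 hc \<sigma>2 Pmax Rmin w \<longleftrightarrow>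
    \<sigma>2 * (2 powr Rmin - 1) \<le> (cmod (herm hc w))\<^sup>2 \<and> Re (herm w w) \<le> Pmax"
  unfolding feasible_P1_def using rate_constraint_iff[OF assms] by simp

lemma feasible_P2_imp_feasible_P1:
  assumes "\<sigma>2 > 0" and "Rmin \<ge> 0" and "feasible_P2 hc \<sigma>2 Pmax Rmin w"
  shows "feasible_P1 hc \<sigma>2 Pmax Rmin w"
proof -
  obtain r where r: "herm hc w = of_real r"
    using assms(3) unfolding feasible_P2_def by (auto elim: Reals_cases)
  have "0 \<le> \<sigma>2 * (2 powr Rmin - 1)"
    using assms(1,2) by (simp add: ge_one_powr_ge_zero)
  moreover have "sqrt (\<sigma>2 * (2 powr Rmin - 1)) \<le> r"
    using assms(3) r unfolding feasible_P2_def by simp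
  ultimately have "\<sigma>2 * (2 powr Rmin - 1) \<le> r\<^sup>2"
    by (metis real_sqrt_le_iff real_sqrt_unique sqrt_le_D)
  with assms r show ?thesis
    unfolding feasible_P1_iff[OF assms(1)] feasible_P2_def by simp
qed

lemma feasible_P1_imp_feasible_P2_rotated:
  assumes "\<sigma>2 > 0" and "feasible_P1 hc \<sigma>2 Pmax Rmin w"
    and "cmod z = 1" and "z * herm hc w = cmod (herm hc w)"
  shows "feasible_P2 hc \<sigma>2 Pmax Rmin (z *s w)"
proof -
  have "sqrt (\<sigma>2 * (2 powr Rmin - 1)) \<le> sqrt ((cmod (herm hc w))\<^sup>2)"
    using assms(2) unfolding feasible_P1_iff[OF assms(1)] by (simp only: real_sqrt_le_iff)
  with assms(2) show ?thesis
    unfolding feasible_P2_def feasible_P1_iff[OF assms(1)] herm_scalar_mult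
    unfolding herm_scalar_mult_right assms(3,4)
    by simp
qed

theorem proposition3:
  fixes g1 g2 hc :: "complex ^ 'n"
    and t1 t2 \<sigma>2 Pmax Rmin :: real
  assumes "t1 > 0" and "t2 > 0" and "\<sigma>2 > 0" and "Pmax > 0" and "Rmin \<ge> 0"
  shows "(INF w \<in> {w. feasible_P1 hc \<sigma>2 Pmax Rmin w}. f_P1 t1 t2 g1 g2 w)
       = (INF p \<in> {(w, y1, y2). feasible_P2 hc \<sigma>2 Pmax Rmin w}.
            (case p of (w, y1, y2) \<Rightarrow> F_P2 t1 t2 g1 g2 w y1 y2))"
    (is "?P1 = ?P2")
proof (rule antisym)
  show "?P1 \<le> ?P2"
  proof (rule INF_greatest, clarify)
    fix w y1 y2
    assume "feasible_P2 hc \<sigma>2 Pmax Rmin w"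
    with assms have "?P1 \<le> f_P1 t1 t2 g1 g2 w"
      by (intro INF_lower) (simp add: feasible_P2_imp_feasible_P1)
    also have "\<dots> \<le> F_P2 t1 t2 g1 g2 w y1 y2"
      using assms(1,2) by (rule f_P1_le_F_P2)
    finally show "?P1 \<le> F_P2 t1 t2 g1 g2 w y1 y2" .
  qed
  show "?P2 \<le> ?P1"
  proof (rule INF_greatest, clarify)
    fix w
    assume "feasible_P1 hc \<sigma>2 Pmax Rmin w"
    define v where "v = cis (- Arg (herm hc w)) *s w"
    have "feasible_P2 hc \<sigma>2 Pmax Rmin v"
      unfolding v_def using assms(3) \<open>feasible_P1 hc \<sigma>2 Pmax Rmin w\<close> norm_cis cis_minus_Arg_mult
      by (rule feasible_P1_imp_feasible_P2_rotated)
    then have "?P2 \<le> F_P2 t1 t2 g1 g2 v (cmod (herm g1 v) / t1) (cmod (herm g2 v) / t2)"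
      by (intro INF_lower2[of "(v, cmod (herm g1 v) / t1, cmod (herm g2 v) / t2)"]) auto
    also have "\<dots> = f_P1 t1 t2 g1 g2 v"
      using assms(1,2) by (rule F_P2_at_optimal_y)
    also have "\<dots> = f_P1 t1 t2 g1 g2 w"
      unfolding v_def using norm_cis by (rule f_P1_unit_scalar_mult)
    finally show "?P2 \<le> f_P1 t1 t2 g1 g2 w" .
  qed
qed

end
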